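(* Let $b,\beta_1,\beta_2,\gamma,\alpha,\lambda,\varepsilon_1,\varepsilon_2$ be positive real numbers and $\beta=\beta_1+\beta_2$. Consider the planar system $$s'=b+\gamma+(\varepsilon_2-b-\beta-\gamma)s-\gamma i-\varepsilon_2 s^2+(\varepsilon_1-\varepsilon_2-\lambda)is,$$ $$i'=\beta_1 s+(\varepsilon_2-\varepsilon_1-\alpha-b)i+(\lambda-\varepsilon_2)is+(\varepsilon_1-\varepsilon_2)i^2,$$ and let $\overset{o}{D}_1$ be the interior of $D_1=\{(s,i): s\ge0,\ i\ge0,\ s+i\le1\}$. Then every nondegenerate rest point of this system in $\overset{o}{D}_1$ is hyperbolic.
   Context: A rest point is nondegenerate if all eigenvalues of the linearization there are nonzero, and hyperbolic if all these eigenvalues have nonzero real parts. *)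

theory Defs
  imports "HOL-Analysis.Analysis"
begin

definition field_s :: "real \<Rightarrow> real \<Rightarrow> real \<Rightarrow> real \<Rightarrow> real \<Rightarrow> real \<Rightarrow> real \<Rightarrow> real \<Rightarrow> real \<Rightarrow> real \<Rightarrow> real" where
  "field_s b beta1 beta2 gam alph lam eps1 eps2 s i =
     b + gam + (eps2 - b - (beta1 + beta2) - gam) * s - gam * i - eps2 * s^2
     + (eps1 - eps2 - lam) * i * s"

definition field_i :: "real \<Rightarrow> real \<Rightarrow> real \<Rightarrow> real \<Rightarrow> real \<Rightarrow> real \<Rightarrow> real \<Rightarrow> real \<Rightarrow> real \<Rightarrow> real \<Rightarrow> real" where
  "field_i b beta1 beta2 gam alph lam eps1 eps2 s i =
     beta1 * s + (eps2 - eps1 - alph - b) * i + (lam - eps2) * i * s + (eps1 - eps2) * i^2"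

definition jacobian2 :: "(real \<Rightarrow> real \<Rightarrow> real) \<Rightarrow> (real \<Rightarrow> real \<Rightarrow> real) \<Rightarrow> real \<Rightarrow> real \<Rightarrow> real^2^2" where
  "jacobian2 F G s i = (\<chi> r c.
     if r = 1 then (if c = 1 then deriv (\<lambda>x. F x i) s else deriv (\<lambda>y. F s y) i)
     else (if c = 1 then deriv (\<lambda>x. G x i) s else deriv (\<lambda>y. G s y) i))"

definition is_eigenvalue :: "real^'n^'n \<Rightarrow> complex \<Rightarrow> bool" where
  "is_eigenvalue A z \<longleftrightarrow>
     det ((\<chi> r c. (if r = c then z else 0) - complex_of_real (A $ r $ c)) :: complex^'n^'n) = 0"

definition nondegenerate :: "real^'n^'n \<Rightarrow> bool" where
  "nondegenerate A \<longleftrightarrow> (\<forall>z. is_eigenvalue A z \<longrightarrow> z \<noteq> 0)"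

definition hyperbolic :: "real^'n^'n \<Rightarrow> bool" where
  "hyperbolic A \<longleftrightarrow> (\<forall>z. is_eigenvalue A z \<longrightarrow> Re z \<noteq> 0)"

definition D1 :: "(real \<times> real) set" where
  "D1 = {(s, i). s \<ge> 0 \<and> i \<ge> 0 \<and> s + i \<le> 1}"

end

theory Submission
  imports Defs
begin

text \<open>A planar linearization with nonzero trace has no eigenvalue on the imaginary axis except
  possibly 0, so at a nondegenerate rest point it suffices to show that the trace does not vanish.
  With the Dulac function \<open>B = 1 / (s i (1 - s - i))\<close>, the divergence of \<open>(B s', B i')\<close>
  at a rest point is \<open>B\<close> times the trace of the linearization, and clearing denominators
  exhibits \<open>s i (1 - s - i)\<close> times the trace as a sum of terms that are negative on the interior
  of \<open>D1\<close>.\<close>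

lemma interior_D1: "interior D1 = {(s, i). 0 < s \<and> 0 < i \<and> s + i < 1}"
proof -
  have halfspace: "interior {x. a \<bullet> x \<le> c} = {x. a \<bullet> x < c}"
    if "a \<in> {(-1, 0), (0, -1), (1, 1)}" for a :: "real \<times> real" and c
    using that by (intro interior_halfspace_le) (auto simp: zero_prod_def)
  have D1_halfspaces:
    "D1 = {x. (-1, 0) \<bullet> x \<le> 0} \<inter> {x. (0, -1) \<bullet> x \<le> 0} \<inter> {x. (1, 1) \<bullet> x \<le> 1}"
    by (auto simp: D1_def)
  have "interior D1 = {x. (-1, 0) \<bullet> x < 0} \<inter> {x. (0, -1) \<bullet> x < 0} \<inter> {x. (1, 1) \<bullet> x < 1}"
    unfolding D1_halfspaces interior_Int by (simp only: halfspace insert_iff simp_thms)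
  also have "\<dots> = {(s, i). 0 < s \<and> 0 < i \<and> s + i < 1}"
    by auto
  finally show ?thesis .
qed

lemma trace_2: "trace (A::'a::semiring_1^2^2) = A$1$1 + A$2$2"
  by (simp add: trace_def UNIV_2)

lemma is_eigenvalue_2_iff:
  fixes A :: "real^2^2"
  shows "is_eigenvalue A z \<longleftrightarrow> z\<^sup>2 - of_real (trace A) * z + of_real (det A) = 0"
  by (simp add: is_eigenvalue_def det_2 trace_2 algebra_simps power2_eq_square)

lemma hyperbolic_if_trace_nonzero:
  fixes A :: "real^2^2"
  assumes "trace A \<noteq> 0" and "nondegenerate A"
  shows "hyperbolic A"
  unfolding hyperbolic_def
proof (intro allI impI notI)
  fix z assume ev: "is_eigenvalue A z" and re: "Re z = 0"
  have "Im (z\<^sup>2 - of_real (trace A) * z + of_real (det A)) = 0"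
    using ev by (simp add: is_eigenvalue_2_iff)
  then have "Im z = 0"
    using re assms(1) by (simp add: power2_eq_square)
  then show False
    using ev re assms(2) by (auto simp: nondegenerate_def complex_eq_iff)
qed

lemma trace_jacobian2: "trace (jacobian2 F G s i) = deriv (\<lambda>x. F x i) s + deriv (\<lambda>y. G s y) i"
  by (simp add: trace_2 jacobian2_def)

lemma deriv_field_s_wrt_s:
  "deriv (\<lambda>x. field_s b beta1 beta2 gam alph lam eps1 eps2 x i) s
     = eps2 - b - (beta1 + beta2) - gam - 2 * eps2 * s + (eps1 - eps2 - lam) * i"
  unfolding field_s_def
  by (rule DERIV_imp_deriv, (rule derivative_eq_intros refl)+) (simp add: algebra_simps)

lemma deriv_field_i_wrt_i:
  "deriv (\<lambda>y. field_i b beta1 beta2 gam alph lam eps1 eps2 s y) i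
     = eps2 - eps1 - alph - b + (lam - eps2) * s + 2 * (eps1 - eps2) * i"
  unfolding field_i_def
  by (rule DERIV_imp_deriv, (rule derivative_eq_intros refl)+) (simp add: algebra_simps)

text \<open>The weights \<open>i (s - r)\<close> and \<open>s (i - r)\<close> are \<open>s i r\<close> times the logarithmic
  partial derivatives of the Dulac function \<open>1 / (s i r)\<close>.\<close>

lemma dulac_divergence_identity:
  fixes b beta1 beta2 gam alph lam eps1 eps2 s i :: real
  defines "r \<equiv> 1 - s - i"
  shows "s * i * r * trace (jacobian2 (field_s b beta1 beta2 gam alph lam eps1 eps2)
                                     (field_i b beta1 beta2 gam alph lam eps1 eps2) s i)
         + i * (s - r) * field_s b beta1 beta2 gam alph lam eps1 eps2 s i
         + s * (i - r) * field_i b beta1 beta2 gam alph lam eps1 eps2 s i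
       = - (i * r * (1 - s) * b + s\<^sup>2 * r * beta1 + s\<^sup>2 * i * beta2 + r\<^sup>2 * i * gam + i\<^sup>2 * s * alph)"
  unfolding trace_jacobian2 deriv_field_s_wrt_s deriv_field_i_wrt_i
  unfolding field_s_def field_i_def r_def
  by (simp add: algebra_simps power2_eq_square)

lemma trace_jacobian2_neg_at_rest_point:
  fixes b beta1 beta2 gam alph lam eps1 eps2 s i :: real
  assumes "b > 0" "beta1 > 0" "beta2 > 0" "gam > 0" "alph > 0"
    and "s > 0" "i > 0" "s + i < 1"
    and "field_s b beta1 beta2 gam alph lam eps1 eps2 s i = 0"
    and "field_i b beta1 beta2 gam alph lam eps1 eps2 s i = 0"
  shows "trace (jacobian2 (field_s b beta1 beta2 gam alph lam eps1 eps2)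
                          (field_i b beta1 beta2 gam alph lam eps1 eps2) s i) < 0"
proof -
  define r where "r = 1 - s - i"
  let ?T = "trace (jacobian2 (field_s b beta1 beta2 gam alph lam eps1 eps2)
                             (field_i b beta1 beta2 gam alph lam eps1 eps2) s i)"
  have "r > 0" "1 - s > 0"
    using assms(6-8) by (simp_all add: r_def)
  have "s * i * r * ?T
          = - (i * r * (1 - s) * b + s\<^sup>2 * r * beta1 + s\<^sup>2 * i * beta2 + r\<^sup>2 * i * gam + i\<^sup>2 * s * alph)"
    using dulac_divergence_identity[of s i b beta1 beta2 gam alph lam eps1 eps2] assms(9,10)
    by (simp add: r_def)
  also have "\<dots> < 0"
    using \<open>r > 0\<close> \<open>1 - s > 0\<close> assms(1-7)
    by (simp only: neg_less_0_iff_less) (intro add_pos_pos mult_pos_pos zero_less_power)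
  finally show ?thesis
    using \<open>r > 0\<close> assms(6,7) by (simp add: mult_less_0_iff)
qed

theorem corollary2p5:
  fixes b beta1 beta2 gam alph lam eps1 eps2 s i :: real
  assumes "b > 0" "beta1 > 0" "beta2 > 0" "gam > 0" "alph > 0" "lam > 0" "eps1 > 0" "eps2 > 0"
    and "(s, i) \<in> interior D1"
    and "field_s b beta1 beta2 gam alph lam eps1 eps2 s i = 0"
    and "field_i b beta1 beta2 gam alph lam eps1 eps2 s i = 0"
    and "nondegenerate (jacobian2 (field_s b beta1 beta2 gam alph lam eps1 eps2)
                                  (field_i b beta1 beta2 gam alph lam eps1 eps2) s i)"
  shows "hyperbolic (jacobian2 (field_s b beta1 beta2 gam alph lam eps1 eps2)
                               (field_i b beta1 beta2 gam alph lam eps1 eps2) s i)"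
proof (rule hyperbolic_if_trace_nonzero)
  have "s > 0" "i > 0" "s + i < 1"
    using assms(9) by (simp_all add: interior_D1)
  with assms(1-5,10,11) show "trace (jacobian2 (field_s b beta1 beta2 gam alph lam eps1 eps2)
                              (field_i b beta1 beta2 gam alph lam eps1 eps2) s i) \<noteq> 0"
    by (intro less_imp_neq trace_jacobian2_neg_at_rest_point)
qed (fact assms(12))

end
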